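(* Let $\mathcal{E}=(\mathbf{R},\mathbf{S},\Sigma_{st},\mathbf{F})$ be a consistent constructive relational to RDF data exchange setting and let $\mathcal{Q}$ be a class of Boolean graph queries robust under simulation. For any query $Q\in\mathcal{Q}$ and any consistent instance $I$ of $\mathbf{R}$, $\mathit{true}$ is the certain answer to $Q$ in $I$ w.r.t. $\mathcal{E}$ if and only if $Q$ is true in every universal simulation solution to $\mathcal{E}$ for $I$.
   Context: Values: $\mathsf{Iri}$ (IRIs, containing predicates $\mathsf{Pred}$), $\mathsf{NullIri}$, $\mathsf{Lit}$ with null literals $\mathsf{NullLit}\subseteq\mathsf{Lit}$; null values are those in $\mathsf{NullLit}\cup\mathsf{NullIri}$, other values are constants. $\mathbf{R}=(\mathcal{R},\Sigma_{fd})$: relation names with arities and functional dependencies; an instance assigns finite sets of tuples of non-null literals to relation names and is consistent if it satisfies $\Sigma_{fd}$. A typed graph: finite set of triples $(s,p,o)$, $s\in\mathsf{Iri}\cup\mathsf{NullIri}$, $p\in\mathsf{Pred}$, $o\in\mathsf{Iri}\cup\mathsf{NullIri}\cup\mathsf{Lit}$, with type facts $T(n)$ ($T\in\mathcal{T}$) and $\mathit{Literal}(n)$ (literal nodes only of type $\mathit{Literal}$, others only of types in $\mathcal{T}$). Deterministic shape schema $\mathbf{S}=(\mathcal{T},\delta)$: partial $\delta:\mathcal{T}\times\mathsf{Pred}\to(\mathcal{T}\cup\{\mathit{Literal}\})\times\{1,?,*,+\}$; a typed graph satisfies it iff for each $\delta(T,p)=S^\mu$, every $p$-successor of a $T$-typed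 node has type $S$, with at most one such successor if $\mu\in\{1,?\}$ and at least one if $\mu\in\{1,+\}$. Constructive setting: IRI constructors $f\in\mathcal{F}$ interpreted as $f^F:\mathsf{Lit}^n\to\mathsf{Iri}$ (constants) with pairwise disjoint ranges; full st-tgds $\forall\bar x.\,\varphi\Rightarrow\psi$, $\varphi$ a conjunction of atoms over $\mathcal{R}$, $\psi$ a conjunction of atoms $\mathit{Triple}(t_1,p,t_2)$, $T(t)$, $\mathit{Literal}(t)$ with terms variables or $f(\bar u)$. A solution for $I$ is a typed graph satisfying $\mathbf{S}$ that together with $I$ satisfies $\Sigma_{st}$; $\mathcal{E}$ is consistent if every consistent instance has a solution. $\mathit{true}$ is the certain answer to a Boolean query $Q$ in $I$ w.r.t. $\mathcal{E}$ iff $Q$ is true in every solution for $I$. Simulation (on the underlying graphs): a relation $R$ between nodes of $G$ and $H$ such that for $(n,m)\in R$: $n$ literal iff $m$ literal; if $n$ is not null then $n=m$; every edge $(n,p,n')\in G$ is matched by some $(m,p,m')\in H$ with $(n',m')\in R$. $G$ is simulated by $H$ if every node of $G$ is related by some simulation to some node of $H$. A class of Boolean queries is robust under simulation if, whenever $G$ is simulated by $H$, every query of the class true in $G$ is true in $H$. A universal simulation solution to $\mathcal{E}$ for $I$ is a solution $\mathcal{U}$ for $I$ that is simulated by every solution for $I$. *)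

theory Defs
  imports Main
begin

text \<open>Nodes/values: constant IRIs, null IRIs, constant (non-null) literals, null literals.
  The set Lit of the paper is the union of the constant and the null literals.\<close>
datatype ('i, 'l) node = Iri 'i | NullIri nat | Lit 'l | NullLit nat

fun is_null :: "('i, 'l) node \<Rightarrow> bool" where
  "is_null (NullIri _) = True"
| "is_null (NullLit _) = True"
| "is_null _ = False"

fun is_literal :: "('i, 'l) node \<Rightarrow> bool" where
  "is_literal (Lit _) = True"
| "is_literal (NullLit _) = True"
| "is_literal _ = False"

text \<open>A functional dependency (R, X, Y) says: positions X determine positions Y in relation R.\<close>
type_synonym 'r fd = "'r \<times> nat set \<times> nat set"

type_synonym ('r, 'l) rinstance = "'r \<Rightarrow> 'l list set"

definition is_instance :: "('r \<Rightarrow> nat) \<Rightarrow> ('r, 'l) rinstance \<Rightarrow> bool" where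
  "is_instance ar I \<longleftrightarrow> (\<forall>R. finite (I R) \<and> (\<forall>t\<in>I R. length t = ar R))"

definition satisfies_fd :: "('r, 'l) rinstance \<Rightarrow> 'r fd \<Rightarrow> bool" where
  "satisfies_fd I fd \<longleftrightarrow> (case fd of (R, X, Y) \<Rightarrow>
     (\<forall>t\<in>I R. \<forall>t'\<in>I R. (\<forall>i\<in>X. t ! i = t' ! i) \<longrightarrow> (\<forall>j\<in>Y. t ! j = t' ! j)))"

definition consistent_instance :: "'r fd set \<Rightarrow> ('r, 'l) rinstance \<Rightarrow> bool" where
  "consistent_instance fds I \<longleftrightarrow> (\<forall>fd\<in>fds. satisfies_fd I fd)"

datatype mult = One | Opt | Star | Plus

datatype 't sty = Ty 't | LiteralTy

type_synonym ('i, 'l) triple = "('i, 'l) node \<times> 'i \<times> ('i, 'l) node"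
type_synonym ('i, 'l) graph = "('i, 'l) triple set"
text \<open>A typed graph: the set of triples together with the set of type facts.\<close>
type_synonym ('i, 'l, 't) tgraph = "('i, 'l) graph \<times> (('i, 'l) node \<times> 't sty) set"

definition wf_tgraph :: "'i set \<Rightarrow> ('i, 'l, 't) tgraph \<Rightarrow> bool" where
  "wf_tgraph Pred G \<longleftrightarrow>
     finite (fst G) \<and> finite (snd G) \<and>
     (\<forall>(s, p, ob) \<in> fst G. \<not> is_literal s \<and> p \<in> Pred) \<and>
     (\<forall>n. (n, LiteralTy) \<in> snd G \<longrightarrow> is_literal n) \<and>
     (\<forall>n T. (n, Ty T) \<in> snd G \<longrightarrow> \<not> is_literal n)"

type_synonym ('t, 'i) shape_schema = "'t \<Rightarrow> 'i \<Rightarrow> ('t sty \<times> mult) option"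

definition satisfies_schema :: "('t, 'i) shape_schema \<Rightarrow> ('i, 'l, 't) tgraph \<Rightarrow> bool" where
  "satisfies_schema \<delta> G \<longleftrightarrow>
     (\<forall>T p S \<mu>. \<delta> T p = Some (S, \<mu>) \<longrightarrow>
        (\<forall>n. (n, Ty T) \<in> snd G \<longrightarrow>
           (\<forall>m. (n, p, m) \<in> fst G \<longrightarrow> (m, S) \<in> snd G) \<and>
           (\<mu> \<in> {One, Opt} \<longrightarrow> (\<forall>m m'. (n, p, m) \<in> fst G \<longrightarrow> (n, p, m') \<in> fst G \<longrightarrow> m = m')) \<and>
           (\<mu> \<in> {One, Plus} \<longrightarrow> (\<exists>m. (n, p, m) \<in> fst G))))"

datatype ('v, 'f) tterm = Var 'v | Fn 'f "'v list"

datatype ('v, 'f, 'i, 't) hatom =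
    TripleA "('v, 'f) tterm" 'i "('v, 'f) tterm"
  | TypeA 't "('v, 'f) tterm"
  | LiteralA "('v, 'f) tterm"

text \<open>A full st-tgd: body (conjunction of relational atoms) and head.\<close>
type_synonym ('r, 'v, 'f, 'i, 't) sttgd = "('r \<times> 'v list) list \<times> ('v, 'f, 'i, 't) hatom list"

fun tterm_vars :: "('v, 'f) tterm \<Rightarrow> 'v set" where
  "tterm_vars (Var x) = {x}"
| "tterm_vars (Fn f xs) = set xs"

fun hatom_vars :: "('v, 'f, 'i, 't) hatom \<Rightarrow> 'v set" where
  "hatom_vars (TripleA s p ob) = tterm_vars s \<union> tterm_vars ob"
| "hatom_vars (TypeA T t) = tterm_vars t"
| "hatom_vars (LiteralA t) = tterm_vars t"

fun wf_tterm :: "('f \<Rightarrow> nat) \<Rightarrow> ('v, 'f) tterm \<Rightarrow> bool" where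
  "wf_tterm far (Var x) = True"
| "wf_tterm far (Fn f xs) = (length xs = far f)"

fun wf_hatom :: "'i set \<Rightarrow> ('f \<Rightarrow> nat) \<Rightarrow> ('v, 'f, 'i, 't) hatom \<Rightarrow> bool" where
  "wf_hatom Pred far (TripleA s p ob) = (p \<in> Pred \<and> wf_tterm far s \<and> wf_tterm far ob)"
| "wf_hatom Pred far (TypeA T t) = wf_tterm far t"
| "wf_hatom Pred far (LiteralA t) = wf_tterm far t"

definition wf_sttgd :: "('r \<Rightarrow> nat) \<Rightarrow> 'i set \<Rightarrow> ('f \<Rightarrow> nat) \<Rightarrow> ('r, 'v, 'f, 'i, 't) sttgd \<Rightarrow> bool" where
  "wf_sttgd ar Pred far d \<longleftrightarrow>
     (\<forall>(R, xs) \<in> set (fst d). length xs = ar R) \<and>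
     (\<forall>a \<in> set (snd d). wf_hatom Pred far a) \<and>
     (\<Union>a \<in> set (snd d). hatom_vars a) \<subseteq> (\<Union>(R, xs) \<in> set (fst d). set xs)"

fun eval_tterm :: "('f \<Rightarrow> 'l list \<Rightarrow> 'i) \<Rightarrow> ('v \<Rightarrow> 'l) \<Rightarrow> ('v, 'f) tterm \<Rightarrow> ('i, 'l) node" where
  "eval_tterm F \<nu> (Var x) = Lit (\<nu> x)"
| "eval_tterm F \<nu> (Fn f xs) = Iri (F f (map \<nu> xs))"

fun holds_hatom :: "('f \<Rightarrow> 'l list \<Rightarrow> 'i) \<Rightarrow> ('i, 'l, 't) tgraph \<Rightarrow> ('v \<Rightarrow> 'l) \<Rightarrow> ('v, 'f, 'i, 't) hatom \<Rightarrow> bool" where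
  "holds_hatom F G \<nu> (TripleA s p ob) = ((eval_tterm F \<nu> s, p, eval_tterm F \<nu> ob) \<in> fst G)"
| "holds_hatom F G \<nu> (TypeA T t) = ((eval_tterm F \<nu> t, Ty T) \<in> snd G)"
| "holds_hatom F G \<nu> (LiteralA t) = ((eval_tterm F \<nu> t, LiteralTy) \<in> snd G)"

text \<open>Body variables can only be bound to values of I, i.e.
  non-null constant literals.\<close>
definition satisfies_sttgd ::
  "('f \<Rightarrow> 'l list \<Rightarrow> 'i) \<Rightarrow> ('r, 'l) rinstance \<Rightarrow> ('i, 'l, 't) tgraph \<Rightarrow> ('r, 'v, 'f, 'i, 't) sttgd \<Rightarrow> bool" where
  "satisfies_sttgd F I G d \<longleftrightarrow>
     (\<forall>\<nu>. (\<forall>(R, xs) \<in> set (fst d). map \<nu> xs \<in> I R) \<longrightarrow> (\<forall>a \<in> set (snd d). holds_hatom F G \<nu> a))"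

record ('r, 'i, 't, 'f, 'v, 'l) setting =
  arity :: "'r \<Rightarrow> nat"
  fds :: "'r fd set"
  preds :: "'i set"
  delta :: "('t, 'i) shape_schema"
  sigma :: "('r, 'v, 'f, 'i, 't) sttgd set"
  farity :: "'f \<Rightarrow> nat"
  finterp :: "'f \<Rightarrow> 'l list \<Rightarrow> 'i"

definition wf_setting :: "('r, 'i, 't, 'f, 'v, 'l) setting \<Rightarrow> bool" where
  "wf_setting E \<longleftrightarrow>
     \<comment> \<open>functional dependencies refer to positions of their relation\<close>
     (\<forall>(R, X, Y) \<in> fds E. X \<subseteq> {..<arity E R} \<and> Y \<subseteq> {..<arity E R}) \<and>
     \<comment> \<open>the shape schema has finitely many types and a finite deterministic \<delta> over predicates\<close>
     finite (UNIV :: 't set) \<and>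
     finite {(T, p). delta E T p \<noteq> None} \<and>
     (\<forall>T p. delta E T p \<noteq> None \<longrightarrow> p \<in> preds E) \<and>
     \<comment> \<open>finitely many well-formed full st-tgds\<close>
     finite (sigma E) \<and> (\<forall>d \<in> sigma E. wf_sttgd (arity E) (preds E) (farity E) d) \<and>
     \<comment> \<open>IRI constructors have pairwise disjoint ranges\<close>
     (\<forall>f g xs ys. f \<noteq> g \<longrightarrow> length xs = farity E f \<longrightarrow> length ys = farity E g \<longrightarrow>
        finterp E f xs \<noteq> finterp E g ys)"

definition is_solution :: "('r, 'i, 't, 'f, 'v, 'l) setting \<Rightarrow> ('r, 'l) rinstance \<Rightarrow> ('i, 'l, 't) tgraph \<Rightarrow> bool" where
  "is_solution E I G \<longleftrightarrow>
     wf_tgraph (preds E) G \<and> satisfies_schema (delta E) G \<and>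
     (\<forall>d \<in> sigma E. satisfies_sttgd (finterp E) I G d)"

definition consistent_setting :: "('r, 'i, 't, 'f, 'v, 'l) setting \<Rightarrow> bool" where
  "consistent_setting E \<longleftrightarrow>
     (\<forall>I. is_instance (arity E) I \<longrightarrow> consistent_instance (fds E) I \<longrightarrow> (\<exists>G. is_solution E I G))"

type_synonym ('i, 'l) query = "('i, 'l) graph \<Rightarrow> bool"

definition certain_true :: "('r, 'i, 't, 'f, 'v, 'l) setting \<Rightarrow> ('r, 'l) rinstance \<Rightarrow> ('i, 'l) query \<Rightarrow> bool" where
  "certain_true E I Q \<longleftrightarrow> (\<forall>G. is_solution E I G \<longrightarrow> Q (fst G))"

definition graph_nodes :: "('i, 'l) graph \<Rightarrow> ('i, 'l) node set" where
  "graph_nodes G = {s. \<exists>p ob. (s, p, ob) \<in> G} \<union> {ob. \<exists>s p. (s, p, ob) \<in> G}"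

definition is_simulation :: "(('i, 'l) node \<times> ('i, 'l) node) set \<Rightarrow> ('i, 'l) graph \<Rightarrow> ('i, 'l) graph \<Rightarrow> bool" where
  "is_simulation R G H \<longleftrightarrow>
     (\<forall>(n, m) \<in> R. (is_literal n \<longleftrightarrow> is_literal m) \<and> (\<not> is_null n \<longrightarrow> n = m) \<and>
        (\<forall>p n'. (n, p, n') \<in> G \<longrightarrow> (\<exists>m'. (m, p, m') \<in> H \<and> (n', m') \<in> R)))"

definition simulated_by :: "('i, 'l) graph \<Rightarrow> ('i, 'l) graph \<Rightarrow> bool" where
  "simulated_by G H \<longleftrightarrow> (\<forall>n \<in> graph_nodes G. \<exists>R m. is_simulation R G H \<and> (n, m) \<in> R)"

definition robust_under_simulation :: "('i, 'l) query set \<Rightarrow> bool" where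
  "robust_under_simulation \<Q> \<longleftrightarrow> (\<forall>G H. simulated_by G H \<longrightarrow> (\<forall>Q \<in> \<Q>. Q G \<longrightarrow> Q H))"

definition universal_simulation_solution ::
  "('r, 'i, 't, 'f, 'v, 'l) setting \<Rightarrow> ('r, 'l) rinstance \<Rightarrow> ('i, 'l, 't) tgraph \<Rightarrow> bool" where
  "universal_simulation_solution E I U \<longleftrightarrow>
     is_solution E I U \<and> (\<forall>H. is_solution E I H \<longrightarrow> simulated_by (fst U) (fst H))"

end

theory Submission
  imports Defs
begin

text \<open>Certain truth trivially implies truth in every universal simulation solution; for the
  converse it suffices to exhibit one universal simulation solution \<open>U\<close>, because robustness
  transports \<open>Q\<close> from \<open>U\<close> to every solution. \<open>U\<close> consists of the triples and type facts over
  constants that occur in every solution, together with one null node for each realizable set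
  \<open>X\<close> of types, i.e. each \<open>X\<close> such that every solution has a node carrying all types of \<open>X\<close>
  (a literal exactly when \<open>X\<close> contains \<open>Literal\<close>). Whenever the schema demands a \<open>p\<close>-successor
  that is not already certain, we add a \<open>p\<close>-edge to the null node of the set of types the
  schema imposes on \<open>p\<close>-successors; that set is again realizable. Determinism of the schema
  makes \<open>U\<close> a solution, and mapping the null node of \<open>X\<close> to the witnesses of \<open>X\<close> in a
  solution \<open>H\<close> yields a simulation of \<open>U\<close> in \<open>H\<close>.\<close>

subsection \<open>Types forced by a shape schema\<close>

definition node_types :: "('i, 'l, 't) tgraph \<Rightarrow> ('i, 'l) node \<Rightarrow> 't sty set" where
  "node_types G n = {S. (n, S) \<in> snd G}"

definition successor_types :: "('t, 'i) shape_schema \<Rightarrow> 't sty set \<Rightarrow> 'i \<Rightarrow> 't sty set" where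
  "successor_types \<delta> X p = {S. \<exists>T \<mu>. Ty T \<in> X \<and> \<delta> T p = Some (S, \<mu>)}"

definition requires_successor :: "('t, 'i) shape_schema \<Rightarrow> 't sty set \<Rightarrow> 'i \<Rightarrow> bool" where
  "requires_successor \<delta> X p \<longleftrightarrow> (\<exists>T S \<mu>. Ty T \<in> X \<and> \<delta> T p = Some (S, \<mu>) \<and> \<mu> \<in> {One, Plus})"

lemma requires_successorD:
  assumes "requires_successor \<delta> X p"
  obtains T S \<mu> where "Ty T \<in> X" "\<delta> T p = Some (S, \<mu>)"
  using assms unfolding requires_successor_def by blast

lemma schema_successor_type:
  assumes "satisfies_schema \<delta> H" "(n, Ty T) \<in> snd H" "\<delta> T p = Some (S, \<mu>)" "(n, p, m) \<in> fst H"
  shows "(m, S) \<in> snd H"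
  using assms unfolding satisfies_schema_def by blast

lemma required_successor_exists:
  assumes sch: "satisfies_schema \<delta> H" and wf: "wf_tgraph P H"
    and X: "X \<subseteq> node_types H m" and req: "requires_successor \<delta> X p"
  shows "\<exists>m'. (m, p, m') \<in> fst H \<and> successor_types \<delta> X p \<subseteq> node_types H m' \<and>
              (is_literal m' \<longleftrightarrow> LiteralTy \<in> successor_types \<delta> X p)"
proof -
  obtain T S0 \<mu> where T: "Ty T \<in> X" "\<delta> T p = Some (S0, \<mu>)" "\<mu> \<in> {One, Plus}"
    using req unfolding requires_successor_def by blast
  then obtain m' where edge: "(m, p, m') \<in> fst H"
    using sch X unfolding satisfies_schema_def node_types_def by blast
  have types: "successor_types \<delta> X p \<subseteq> node_types H m'"
    using sch X edge unfolding satisfies_schema_def node_types_def successor_types_def by blast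
  have S0: "S0 \<in> successor_types \<delta> X p"
    using T by (auto simp: successor_types_def)
  have "is_literal m' \<longleftrightarrow> LiteralTy \<in> successor_types \<delta> X p"
  proof (cases S0)
    case (Ty T0)
    then have "\<not> is_literal m'"
      using S0 types wf unfolding node_types_def wf_tgraph_def by blast
    moreover have "LiteralTy \<notin> successor_types \<delta> X p"
      using S0 Ty types wf unfolding node_types_def wf_tgraph_def by blast
    ultimately show ?thesis by blast
  next
    case LiteralTy
    then show ?thesis
      using S0 types wf unfolding node_types_def wf_tgraph_def by blast
  qed
  with edge types show ?thesis by blast
qed

subsection \<open>Null nodes named by sets of types\<close>

definition null_of :: "('t sty set \<Rightarrow> nat) \<Rightarrow> 't sty set \<Rightarrow> ('i, 'l) node" where
  "null_of enc X = (if LiteralTy \<in> X then NullLit (enc X) else NullIri (enc X))"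

lemma is_null_null_of [simp]: "is_null (null_of enc X)"
  by (simp add: null_of_def)

lemma is_literal_null_of [simp]: "is_literal (null_of enc X) \<longleftrightarrow> LiteralTy \<in> X"
  by (simp add: null_of_def)

lemma null_of_eq_iff [simp]: "inj enc \<Longrightarrow> null_of enc X = null_of enc Y \<longleftrightarrow> X = Y"
  by (auto simp: null_of_def inj_def split: if_splits)

lemma finite_UNIV_sty:
  assumes "finite (UNIV :: 't set)"
  shows "finite (UNIV :: 't sty set)"
proof -
  have "(UNIV :: 't sty set) = insert LiteralTy (range Ty)"
    by (auto intro: sty.exhaust)
  also have "finite \<dots>"
    using assms by simp
  finally show ?thesis .
qed

lemma ex_inj_type_set_encoding:
  assumes "finite (UNIV :: 't set)"
  obtains enc :: "'t sty set \<Rightarrow> nat" where "inj enc"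
proof -
  have "finite (UNIV :: 't sty set set)"
    using finite_UNIV_sty[OF assms] by (simp add: Finite_Set.finite_set)
  from finite_imp_inj_to_nat_seg[OF this] obtain enc :: "'t sty set \<Rightarrow> nat" where "inj enc"
    by blast
  then show ?thesis by (rule that)
qed

subsection \<open>The canonical solution\<close>

definition certain_triples :: "('r, 'i, 't, 'f, 'v, 'l) setting \<Rightarrow> ('r, 'l) rinstance \<Rightarrow> ('i, 'l) graph" where
  "certain_triples E I = {(a, p, b). \<not> is_null a \<and> \<not> is_null b \<and>
     (\<forall>H. is_solution E I H \<longrightarrow> (a, p, b) \<in> fst H)}"

definition certain_type_facts ::
  "('r, 'i, 't, 'f, 'v, 'l) setting \<Rightarrow> ('r, 'l) rinstance \<Rightarrow> (('i, 'l) node \<times> 't sty) set" where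
  "certain_type_facts E I = {(n, S). \<not> is_null n \<and> (\<forall>H. is_solution E I H \<longrightarrow> (n, S) \<in> snd H)}"

definition certain_types ::
  "('r, 'i, 't, 'f, 'v, 'l) setting \<Rightarrow> ('r, 'l) rinstance \<Rightarrow> ('i, 'l) node \<Rightarrow> 't sty set" where
  "certain_types E I n = {S. (n, S) \<in> certain_type_facts E I}"

definition realizable :: "('r, 'i, 't, 'f, 'v, 'l) setting \<Rightarrow> ('r, 'l) rinstance \<Rightarrow> 't sty set \<Rightarrow> bool" where
  "realizable E I X \<longleftrightarrow> (\<forall>H. is_solution E I H \<longrightarrow>
     (\<exists>m. X \<subseteq> node_types H m \<and> (is_literal m \<longleftrightarrow> LiteralTy \<in> X)))"

definition constant_null_edges ::
  "('r, 'i, 't, 'f, 'v, 'l) setting \<Rightarrow> ('r, 'l) rinstance \<Rightarrow> ('t sty set \<Rightarrow> nat) \<Rightarrow> ('i, 'l) graph" where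
  "constant_null_edges E I enc =
     {(n, p, null_of enc (successor_types (delta E) (certain_types E I n) p)) | n p.
        \<not> is_null n \<and> requires_successor (delta E) (certain_types E I n) p \<and>
        \<not> (\<exists>m. (n, p, m) \<in> certain_triples E I)}"

definition null_null_edges ::
  "('r, 'i, 't, 'f, 'v, 'l) setting \<Rightarrow> ('r, 'l) rinstance \<Rightarrow> ('t sty set \<Rightarrow> nat) \<Rightarrow> ('i, 'l) graph" where
  "null_null_edges E I enc =
     {(null_of enc X, p, null_of enc (successor_types (delta E) X p)) | X p.
        realizable E I X \<and> requires_successor (delta E) X p}"

definition null_type_facts ::
  "('r, 'i, 't, 'f, 'v, 'l) setting \<Rightarrow> ('r, 'l) rinstance \<Rightarrow> ('t sty set \<Rightarrow> nat) \<Rightarrow>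
   (('i, 'l) node \<times> 't sty) set" where
  "null_type_facts E I enc = {(null_of enc X, S) | X S. realizable E I X \<and> S \<in> X}"

definition canonical_solution ::
  "('r, 'i, 't, 'f, 'v, 'l) setting \<Rightarrow> ('r, 'l) rinstance \<Rightarrow> ('t sty set \<Rightarrow> nat) \<Rightarrow> ('i, 'l, 't) tgraph" where
  "canonical_solution E I enc =
     (certain_triples E I \<union> constant_null_edges E I enc \<union> null_null_edges E I enc,
      certain_type_facts E I \<union> null_type_facts E I enc)"

lemma certain_triples_iff:
  "(a, p, b) \<in> certain_triples E I \<longleftrightarrow>
     \<not> is_null a \<and> \<not> is_null b \<and> (\<forall>H. is_solution E I H \<longrightarrow> (a, p, b) \<in> fst H)"
  unfolding certain_triples_def by blast

lemma certain_type_facts_iff: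
  "(n, S) \<in> certain_type_facts E I \<longleftrightarrow>
     \<not> is_null n \<and> (\<forall>H. is_solution E I H \<longrightarrow> (n, S) \<in> snd H)"
  unfolding certain_type_facts_def by blast

lemma certain_types_subset:
  "is_solution E I H \<Longrightarrow> certain_types E I n \<subseteq> node_types H n"
  unfolding certain_types_def certain_type_facts_iff node_types_def by blast

lemma realizable_successor_types:
  assumes witness: "\<forall>H. is_solution E I H \<longrightarrow> (\<exists>m. X \<subseteq> node_types H m)"
    and req: "requires_successor (delta E) X p"
  shows "realizable E I (successor_types (delta E) X p)"
  unfolding realizable_def
proof (intro allI impI)
  fix H assume H: "is_solution E I H"
  with witness obtain m where "X \<subseteq> node_types H m" by blast
  with H req show "\<exists>m'. successor_types (delta E) X p \<subseteq> node_types H m' \<and>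
      (is_literal m' \<longleftrightarrow> LiteralTy \<in> successor_types (delta E) X p)"
    using required_successor_exists[of "delta E" H "preds E" X m p]
    unfolding is_solution_def by blast
qed

lemma realizable_successor_of_realizable:
  assumes "realizable E I X" "requires_successor (delta E) X p"
  shows "realizable E I (successor_types (delta E) X p)"
proof (rule realizable_successor_types[OF _ assms(2)])
  show "\<forall>H. is_solution E I H \<longrightarrow> (\<exists>m. X \<subseteq> node_types H m)"
    using assms(1) unfolding realizable_def by blast
qed

lemma realizable_successor_of_constant:
  "requires_successor (delta E) (certain_types E I n) p \<Longrightarrow>
   realizable E I (successor_types (delta E) (certain_types E I n) p)"
  using certain_types_subset by (intro realizable_successor_types) blast+

locale canonical_construction =
  fixes E :: "('r, 'i, 't, 'f, 'v, 'l) setting" and I :: "('r, 'l) rinstance"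
    and enc :: "'t sty set \<Rightarrow> nat" and G0 :: "('i, 'l, 't) tgraph"
  assumes wf: "wf_setting E" and inj: "inj enc" and G0: "is_solution E I G0"
begin

abbreviation U :: "('i, 'l, 't) tgraph" where
  "U \<equiv> canonical_solution E I enc"

abbreviation succ_types :: "'t sty set \<Rightarrow> 'i \<Rightarrow> 't sty set" where
  "succ_types \<equiv> successor_types (delta E)"

abbreviation requires :: "'t sty set \<Rightarrow> 'i \<Rightarrow> bool" where
  "requires \<equiv> requires_successor (delta E)"

lemma G0_wf: "wf_tgraph (preds E) G0" and G0_schema: "satisfies_schema (delta E) G0"
  using G0 by (auto simp: is_solution_def)

lemma certain_triples_G0: "certain_triples E I \<subseteq> fst G0"
  using G0 unfolding certain_triples_def by blast

lemma certain_type_facts_G0: "certain_type_facts E I \<subseteq> snd G0"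
  using G0 unfolding certain_type_facts_def by blast

lemma requires_pred: "requires X p \<Longrightarrow> p \<in> preds E"
  using wf unfolding wf_setting_def by (blast elim: requires_successorD)

text \<open>This is where the solution \<open>G0\<close> is needed: if there were no solution, every set of
  types would be vacuously realizable.\<close>
lemma realizable_typed_not_literal:
  assumes "realizable E I X" "Ty T \<in> X"
  shows "LiteralTy \<notin> X"
proof -
  obtain m where "X \<subseteq> node_types G0 m" "is_literal m \<longleftrightarrow> LiteralTy \<in> X"
    using assms(1) G0 unfolding realizable_def by blast
  with assms(2) G0_wf show ?thesis
    unfolding node_types_def wf_tgraph_def by blast
qed

lemma edge_from_constant:
  assumes "\<not> is_null n"
  shows "(n, p, m) \<in> fst U \<longleftrightarrow> (n, p, m) \<in> certain_triples E I \<or>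
           (requires (certain_types E I n) p \<and> \<not> (\<exists>m'. (n, p, m') \<in> certain_triples E I) \<and>
            m = null_of enc (succ_types (certain_types E I n) p))"
  using assms by (auto simp: canonical_solution_def constant_null_edges_def null_null_edges_def)

lemma edge_from_null:
  "(null_of enc X, p, m) \<in> fst U \<longleftrightarrow>
     realizable E I X \<and> requires X p \<and> m = null_of enc (succ_types X p)"
  using inj by (auto simp: canonical_solution_def certain_triples_iff constant_null_edges_def
      null_null_edges_def)

lemma types_of_null:
  "(null_of enc X, S) \<in> snd U \<longleftrightarrow> realizable E I X \<and> S \<in> X"
  using inj by (auto simp: canonical_solution_def null_type_facts_def certain_type_facts_iff)

lemma canonical_type_fact_cases:
  assumes "(n, S) \<in> snd U"
  obtains (certain) "(n, S) \<in> certain_type_facts E I"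
    | (null) X where "n = null_of enc X" "realizable E I X" "S \<in> X"
  using assms unfolding canonical_solution_def null_type_facts_def snd_conv by blast

lemma finite_required_preds: "finite {p. \<exists>X. requires X p}"
proof (rule finite_subset)
  show "{p. \<exists>X. requires X p} \<subseteq> snd ` {(T, p). delta E T p \<noteq> None}"
    by (force elim: requires_successorD)
  show "finite (snd ` {(T, p). delta E T p \<noteq> None})"
    using wf by (simp add: wf_setting_def)
qed

lemma finite_type_sets: "finite (UNIV :: 't sty set)" "finite (UNIV :: 't sty set set)"
  using wf finite_UNIV_sty unfolding wf_setting_def by (auto simp: Finite_Set.finite_set)

lemma finite_constant_null_edges: "finite (constant_null_edges E I enc)"
proof (rule finite_subset)
  let ?edge = "\<lambda>(n, p). (n, p, null_of enc (succ_types (certain_types E I n) p))"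
  show "constant_null_edges E I enc \<subseteq> ?edge ` (fst ` snd G0 \<times> {p. \<exists>X. requires X p})"
  proof
    fix e assume "e \<in> constant_null_edges E I enc"
    then obtain n p where e: "e = ?edge (n, p)" and req: "requires (certain_types E I n) p"
      unfolding constant_null_edges_def by auto
    then obtain T where "(n, Ty T) \<in> snd G0"
      using certain_type_facts_G0 by (auto simp: certain_types_def elim!: requires_successorD)
    with e req show "e \<in> ?edge ` (fst ` snd G0 \<times> {p. \<exists>X. requires X p})"
      by force
  qed
  show "finite (?edge ` (fst ` snd G0 \<times> {p. \<exists>X. requires X p}))"
    using G0_wf finite_required_preds by (simp add: wf_tgraph_def)
qed

lemma finite_null_null_edges: "finite (null_null_edges E I enc)"
proof (rule finite_subset)
  let ?edge = "\<lambda>(X, p). (null_of enc X, p, null_of enc (succ_types X p))"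
  show "null_null_edges E I enc \<subseteq> ?edge ` (UNIV \<times> {p. \<exists>X. requires X p})"
    unfolding null_null_edges_def by fastforce
  show "finite (?edge ` (UNIV \<times> {p. \<exists>X. requires X p}))"
    using finite_type_sets finite_required_preds by simp
qed

lemma finite_null_type_facts: "finite (null_type_facts E I enc)"
proof (rule finite_subset)
  show "null_type_facts E I enc \<subseteq> (\<lambda>(X, S). (null_of enc X, S)) ` (UNIV \<times> (UNIV :: 't sty set))"
    unfolding null_type_facts_def by fastforce
  show "finite ((\<lambda>(X, S). (null_of enc X, S)) ` (UNIV \<times> (UNIV :: 't sty set)))"
    by (intro finite_imageI finite_cartesian_product finite_type_sets)
qed

lemma finite_canonical: "finite (fst U)" "finite (snd U)"
proof -
  have "finite (certain_triples E I)" "finite (certain_type_facts E I)"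
    using finite_subset[OF certain_triples_G0] finite_subset[OF certain_type_facts_G0] G0_wf
    unfolding wf_tgraph_def by blast+
  then show "finite (fst U)" "finite (snd U)"
    using finite_constant_null_edges finite_null_null_edges finite_null_type_facts
    by (simp_all add: canonical_solution_def)
qed

lemma canonical_edge_cases:
  assumes "(s, p, m) \<in> fst U"
  obtains (certain) "(s, p, m) \<in> certain_triples E I"
    | (constant_null) "\<not> is_null s" "requires (certain_types E I s) p"
        "m = null_of enc (succ_types (certain_types E I s) p)"
    | (null_null) X where "s = null_of enc X" "realizable E I X" "requires X p"
        "m = null_of enc (succ_types X p)"
  using assms unfolding canonical_solution_def constant_null_edges_def null_null_edges_def fst_conv
  by blast

lemma edge_subject_wf:
  assumes "(s, p, m) \<in> fst U"
  shows "\<not> is_literal s \<and> p \<in> preds E"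
  using assms
proof (cases rule: canonical_edge_cases)
  case certain
  then show ?thesis using certain_triples_G0 G0_wf unfolding wf_tgraph_def by blast
next
  case constant_null
  then obtain T where "(s, Ty T) \<in> snd G0"
    using certain_type_facts_G0 by (auto simp: certain_types_def elim!: requires_successorD)
  then show ?thesis using G0_wf requires_pred constant_null(2) unfolding wf_tgraph_def by blast
next
  case (null_null X)
  then obtain T where "Ty T \<in> X" by (blast elim: requires_successorD)
  then show ?thesis using null_null realizable_typed_not_literal requires_pred by simp
qed

lemma type_fact_wf:
  assumes "(n, S) \<in> snd U"
  shows "is_literal n \<longleftrightarrow> S = LiteralTy"
  using assms
proof (cases rule: canonical_type_fact_cases)
  case certain
  then show ?thesis using certain_type_facts_G0 G0_wf
    unfolding wf_tgraph_def by (cases S) blast+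
next
  case (null X)
  then show ?thesis using realizable_typed_not_literal by (cases S) auto
qed

lemma canonical_wf: "wf_tgraph (preds E) U"
  unfolding wf_tgraph_def using finite_canonical edge_subject_wf type_fact_wf by blast

lemma successor_typed:
  assumes nT: "(n, Ty T) \<in> snd U" and \<delta>: "delta E T p = Some (S, \<mu>)"
    and edge: "(n, p, m) \<in> fst U"
  shows "(m, S) \<in> snd U"
proof -
  have null_target: "(null_of enc (succ_types Y p), S) \<in> snd U"
    if "realizable E I (succ_types Y p)" "Ty T \<in> Y" for Y
    using that \<delta> by (auto simp: types_of_null successor_types_def)
  from nT show ?thesis
  proof (cases rule: canonical_type_fact_cases)
    case certain
    then have n: "\<not> is_null n" "Ty T \<in> certain_types E I n"
      by (simp_all add: certain_type_facts_iff certain_types_def)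
    show ?thesis
    proof (cases "(n, p, m) \<in> certain_triples E I")
      case True
      have "(m, S) \<in> snd H" if H: "is_solution E I H" for H
      proof (rule schema_successor_type)
        show "satisfies_schema (delta E) H" using H by (simp add: is_solution_def)
        show "(n, Ty T) \<in> snd H" using certain H unfolding certain_type_facts_iff by blast
        show "(n, p, m) \<in> fst H" using True H unfolding certain_triples_iff by blast
      qed (rule \<delta>)
      with True have "(m, S) \<in> certain_type_facts E I"
        unfolding certain_triples_iff certain_type_facts_iff by blast
      then show ?thesis by (simp add: canonical_solution_def)
    next
      case False
      with edge have req: "requires (certain_types E I n) p"
        and m: "m = null_of enc (succ_types (certain_types E I n) p)"
        unfolding edge_from_constant[OF n(1)] by blast+
      show ?thesis
        unfolding m by (rule null_target[OF realizable_successor_of_constant[OF req] n(2)])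
    qed
  next
    case (null X)
    from edge have req: "requires X p" and m: "m = null_of enc (succ_types X p)"
      unfolding null(1) edge_from_null by blast+
    show ?thesis
      unfolding m by (rule null_target[OF realizable_successor_of_realizable[OF null(2) req] null(3)])
  qed
qed

lemma successor_unique:
  assumes nT: "(n, Ty T) \<in> snd U" and \<delta>: "delta E T p = Some (S, \<mu>)" and \<mu>: "\<mu> \<in> {One, Opt}"
    and edges: "(n, p, m) \<in> fst U" "(n, p, m') \<in> fst U"
  shows "m = m'"
  using nT
proof (cases rule: canonical_type_fact_cases)
  case certain
  then have n: "\<not> is_null n" by (simp add: certain_type_facts_iff)
  show ?thesis
  proof (cases "(n, p, m) \<in> certain_triples E I \<and> (n, p, m') \<in> certain_triples E I")
    case True
    then show ?thesis
      using certain \<delta> \<mu> certain_triples_G0 certain_type_facts_G0 G0_schema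
      unfolding satisfies_schema_def by blast
  next
    case False
    then show ?thesis using edges unfolding edge_from_constant[OF n] by blast
  qed
next
  case (null X)
  then show ?thesis using edges unfolding null(1) edge_from_null by blast
qed

lemma successor_exists:
  assumes nT: "(n, Ty T) \<in> snd U" and \<delta>: "delta E T p = Some (S, \<mu>)" and \<mu>: "\<mu> \<in> {One, Plus}"
  shows "\<exists>m. (n, p, m) \<in> fst U"
  using nT
proof (cases rule: canonical_type_fact_cases)
  case certain
  then have n: "\<not> is_null n" and "requires (certain_types E I n) p"
    using \<delta> \<mu> by (auto simp: certain_type_facts_iff certain_types_def requires_successor_def)
  then show ?thesis unfolding edge_from_constant[OF n] by blast
next
  case (null X)
  then have "requires X p" using \<delta> \<mu> by (auto simp: requires_successor_def)
  with null show ?thesis unfolding null(1) edge_from_null by blast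
qed

lemma canonical_schema: "satisfies_schema (delta E) U"
  unfolding satisfies_schema_def
  using successor_typed successor_unique successor_exists by blast

lemma canonical_sttgds:
  assumes "d \<in> sigma E"
  shows "satisfies_sttgd (finterp E) I U d"
  unfolding satisfies_sttgd_def
proof (intro allI impI ballI)
  fix \<nu> a assume body: "\<forall>(R, xs) \<in> set (fst d). map \<nu> xs \<in> I R" and a: "a \<in> set (snd d)"
  have in_all_solutions: "\<forall>H. is_solution E I H \<longrightarrow> holds_hatom (finterp E) H \<nu> a"
    using assms body a unfolding is_solution_def satisfies_sttgd_def by blast
  have not_null: "\<not> is_null (eval_tterm (finterp E) \<nu> t)" for t
    by (cases t) auto
  show "holds_hatom (finterp E) U \<nu> a"
    using in_all_solutions not_null
    by (cases a) (auto simp: canonical_solution_def certain_triples_iff certain_type_facts_iff)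
qed

lemma canonical_is_solution: "is_solution E I U"
  unfolding is_solution_def using canonical_wf canonical_schema canonical_sttgds by blast

definition sim_witnesses :: "('i, 'l, 't) tgraph \<Rightarrow> (('i, 'l) node \<times> ('i, 'l) node) set" where
  "sim_witnesses H = {(n, n) | n. \<not> is_null n} \<union>
     {(null_of enc X, m) | X m. realizable E I X \<and> X \<subseteq> node_types H m \<and>
        (is_literal m \<longleftrightarrow> LiteralTy \<in> X)}"

lemma sim_witnesses_successor:
  assumes H: "is_solution E I H" and Y: "Y \<subseteq> node_types H m" and req: "requires Y p"
    and realizable: "realizable E I (succ_types Y p)"
  shows "\<exists>m'. (m, p, m') \<in> fst H \<and> (null_of enc (succ_types Y p), m') \<in> sim_witnesses H"
proof -
  obtain m' where edge: "(m, p, m') \<in> fst H" and types: "succ_types Y p \<subseteq> node_types H m'"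
    and literal: "is_literal m' \<longleftrightarrow> LiteralTy \<in> succ_types Y p"
    using required_successor_exists[OF _ _ Y req] H unfolding is_solution_def by blast
  have "(null_of enc (succ_types Y p), m') \<in> sim_witnesses H"
    unfolding sim_witnesses_def using realizable types literal by blast
  with edge show ?thesis by blast
qed

lemma sim_witnesses_cases:
  assumes "(n, m) \<in> sim_witnesses H"
  obtains (identity) "\<not> is_null n" "m = n"
    | (null) X where "n = null_of enc X" "realizable E I X" "X \<subseteq> node_types H m"
        "is_literal m \<longleftrightarrow> LiteralTy \<in> X"
  using assms unfolding sim_witnesses_def by blast

lemma sim_witnesses_edge:
  assumes H: "is_solution E I H" and nm: "(n, m) \<in> sim_witnesses H"
    and edge: "(n, p, n') \<in> fst U"
  shows "\<exists>m'. (m, p, m') \<in> fst H \<and> (n', m') \<in> sim_witnesses H"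
  using nm
proof (cases rule: sim_witnesses_cases)
  case identity
  show ?thesis
  proof (cases "(n, p, n') \<in> certain_triples E I")
    case True
    then have "(m, p, n') \<in> fst H" "(n', n') \<in> sim_witnesses H"
      using H identity(2) unfolding certain_triples_iff sim_witnesses_def by blast+
    then show ?thesis by blast
  next
    case False
    with edge have req: "requires (certain_types E I n) p"
      and n': "n' = null_of enc (succ_types (certain_types E I n) p)"
      unfolding edge_from_constant[OF identity(1)] by blast+
    show ?thesis
      unfolding n' identity(2)
      by (rule sim_witnesses_successor[OF H certain_types_subset[OF H] req
            realizable_successor_of_constant[OF req]])
  qed
next
  case (null X)
  from edge have req: "requires X p" and n': "n' = null_of enc (succ_types X p)"
    unfolding null(1) edge_from_null by blast+
  show ?thesis
    unfolding n'
    by (rule sim_witnesses_successor[OF H null(3) req realizable_successor_of_realizable[OF null(2) req]])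
qed

lemma is_simulation_sim_witnesses:
  assumes H: "is_solution E I H"
  shows "is_simulation (sim_witnesses H) (fst U) (fst H)"
  unfolding is_simulation_def
proof (intro ballI, clarify)
  fix n m assume nm: "(n, m) \<in> sim_witnesses H"
  then have "(is_literal n \<longleftrightarrow> is_literal m) \<and> (\<not> is_null n \<longrightarrow> n = m)"
    by (cases rule: sim_witnesses_cases) simp_all
  with sim_witnesses_edge[OF H nm]
  show "(is_literal n \<longleftrightarrow> is_literal m) \<and> (\<not> is_null n \<longrightarrow> n = m) \<and>
      (\<forall>p n'. (n, p, n') \<in> fst U \<longrightarrow> (\<exists>m'. (m, p, m') \<in> fst H \<and> (n', m') \<in> sim_witnesses H))"
    by blast
qed

lemma null_nodes_realizable:
  assumes "n \<in> graph_nodes (fst U)" "is_null n"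
  shows "\<exists>X. n = null_of enc X \<and> realizable E I X"
proof -
  consider (subject) p m where "(n, p, m) \<in> fst U" | (object) s p where "(s, p, n) \<in> fst U"
    using assms(1) unfolding graph_nodes_def by blast
  then show ?thesis
  proof cases
    case subject
    then show ?thesis
      by (cases rule: canonical_edge_cases) (use assms(2) in \<open>auto simp: certain_triples_iff\<close>)
  next
    case object
    then show ?thesis
    proof (cases rule: canonical_edge_cases)
      case certain
      then show ?thesis using assms(2) unfolding certain_triples_iff by blast
    next
      case constant_null
      then show ?thesis using realizable_successor_of_constant[OF constant_null(2)] by blast
    next
      case (null_null X)
      then show ?thesis using realizable_successor_of_realizable[OF null_null(2,3)] by blast
    qed
  qed
qed

lemma canonical_simulated_by:
  assumes H: "is_solution E I H"
  shows "simulated_by (fst U) (fst H)"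
  unfolding simulated_by_def
proof
  fix n assume n: "n \<in> graph_nodes (fst U)"
  have "\<exists>m. (n, m) \<in> sim_witnesses H"
  proof (cases "is_null n")
    case True
    then obtain X where X: "n = null_of enc X" "realizable E I X"
      using null_nodes_realizable[OF n] by blast
    then obtain m where "X \<subseteq> node_types H m" "is_literal m \<longleftrightarrow> LiteralTy \<in> X"
      using H unfolding realizable_def by blast
    with X have "(n, m) \<in> sim_witnesses H"
      unfolding sim_witnesses_def by blast
    then show ?thesis ..
  qed (auto simp: sim_witnesses_def)
  then show "\<exists>R m. is_simulation R (fst U) (fst H) \<and> (n, m) \<in> R"
    using is_simulation_sim_witnesses[OF H] by blast
qed

lemma canonical_universal: "universal_simulation_solution E I U"
  unfolding universal_simulation_solution_def
  using canonical_is_solution canonical_simulated_by by blast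

end

lemma universal_simulation_solution_exists:
  fixes E :: "('r, 'i, 't, 'f, 'v, 'l) setting"
  assumes "wf_setting E" and "is_solution E I G"
  shows "\<exists>U. universal_simulation_solution E I U"
proof -
  have "finite (UNIV :: 't set)"
    using assms(1) unfolding wf_setting_def by blast
  then obtain enc :: "'t sty set \<Rightarrow> nat" where "inj enc"
    by (rule ex_inj_type_set_encoding)
  then interpret canonical_construction E I enc G
    using assms by unfold_locales
  show ?thesis using canonical_universal by blast
qed

lemma certain_true_if_universal:
  assumes "robust_under_simulation \<Q>" "Q \<in> \<Q>"
    and "universal_simulation_solution E I U" "Q (fst U)"
  shows "certain_true E I Q"
  using assms unfolding certain_true_def universal_simulation_solution_def robust_under_simulation_def
  by blast

theorem theorem6:
  fixes E :: "('r, 'i, 't, 'f, 'v, 'l) setting"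
    and \<Q> :: "('i, 'l) query set"
    and Q :: "('i, 'l) query"
    and I :: "('r, 'l) rinstance"
  assumes "wf_setting E"
    and "consistent_setting E"
    and "robust_under_simulation \<Q>"
    and "Q \<in> \<Q>"
    and "is_instance (arity E) I"
    and "consistent_instance (fds E) I"
  shows "certain_true E I Q \<longleftrightarrow>
         (\<forall>U. universal_simulation_solution E I U \<longrightarrow> Q (fst U))"
proof
  assume "certain_true E I Q"
  then show "\<forall>U. universal_simulation_solution E I U \<longrightarrow> Q (fst U)"
    unfolding certain_true_def universal_simulation_solution_def by blast
next
  assume Q_universal: "\<forall>U. universal_simulation_solution E I U \<longrightarrow> Q (fst U)"
  obtain G where "is_solution E I G"
    using assms(2,5,6) unfolding consistent_setting_def by blast
  then obtain U where "universal_simulation_solution E I U"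
    using assms(1) universal_simulation_solution_exists by blast
  with Q_universal show "certain_true E I Q"
    by (intro certain_true_if_universal[OF assms(3,4)]) blast+
qed

end
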